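(* Let $i\ge0$, let $\mathbf{e}_i$ be a 1-dimensional error pattern at level $i$, let $\mathbf{e}_{i+1}$ be a 1-dimensional preimage of $\mathbf{e}_i$, and let $P_{i+1}$ be the number of paths of $\mathbf{e}_{i+1}$. Then $\mathrm{wt}(\mathbf{e}_{i+1})+P_{i+1}\ge2\,\mathrm{wt}(\mathbf{e}_i)$.
   Context: 1-dimensional model. For $j\ge0$, the line at level $j$ is the cycle with vertex set $\mathbb{Z}/2^j\mathbb{Z}$ and edges $\{v,v+1\}$, $v\in\mathbb{Z}/2^j\mathbb{Z}$ (for $j=0$, one vertex with a loop edge). A 1-dimensional error pattern at level $j$ is a subset of these edges; $\mathrm{wt}$ is its number of edges; its syndrome is the set of vertices incident to an odd number of its edges. The number of paths of a pattern is the number of connected components (maximal runs of consecutive edges) of the pattern, except that it is $0$ when the pattern is the whole cycle. At level $j+1$, block $m\in\mathbb{Z}/2^j\mathbb{Z}$ consists of the left edge $\{2m,2m+1\}$ and right edge $\{2m+1,2m+2\}$ and corresponds to the edge $\{m,m+1\}$ at level $j$. One reduction stage applied to a pattern $\mathbf{f}$ at level $j+1$ with syndrome $S$: (a) for every block, if $2m+1,2m+2\in S$, flip (add mod 2) the right edge and remove both from $S$; (b) then for every block, if $2m+1$ is still in $S$, flip the left edge. In the resulting pattern $\mathbf{f}'$ each block contains $0$ or $2$ edges; the image of $\mathbf{f}$ is the pattern at level $j$ containing $\{m,m+1\}$ iff block $m\subseteq\mathbf{f}'$. A pattern $\mathbf{f}$ at level $j+1$ is a 1-dimensional preimage of $\mathbf{g}$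 at level $j$ if the image of $\mathbf{f}$ is $\mathbf{g}$. *)

theory Defs
  imports Main
begin

text \<open>Level j: the cycle on vertices {0..<2^j} (= Z/2^j Z). Edge number e (e < 2^j)
  is the edge {e, e+1 mod 2^j}; for j = 0 this is the loop at vertex 0.
  A pattern is a set of edge numbers.\<close>

definition edges1 :: "nat \<Rightarrow> nat set" where
  "edges1 j = {..<2^j}"

definition is_pattern1 :: "nat \<Rightarrow> nat set \<Rightarrow> bool" where
  "is_pattern1 j f \<longleftrightarrow> f \<subseteq> edges1 j"

definition wt :: "nat set \<Rightarrow> nat" where
  "wt f = card f"

definition incident1 :: "nat \<Rightarrow> nat \<Rightarrow> nat \<Rightarrow> bool" where
  "incident1 j e v \<longleftrightarrow> v = e \<or> v = (e + 1) mod 2^j"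

definition syndrome1 :: "nat \<Rightarrow> nat set \<Rightarrow> nat set" where
  "syndrome1 j f = {v. v < 2^j \<and> odd (card {e \<in> f. incident1 j e v})}"

definition adj1 :: "nat \<Rightarrow> nat set \<Rightarrow> (nat \<times> nat) set" where
  "adj1 j f = {(u, v). u \<in> f \<and> v \<in> f \<and> (v = (u + 1) mod 2^j \<or> u = (v + 1) mod 2^j)}"

definition conn1 :: "nat \<Rightarrow> nat set \<Rightarrow> (nat \<times> nat) set" where
  "conn1 j f = (adj1 j f)\<^sup>* \<inter> (f \<times> f)"

definition num_paths :: "nat \<Rightarrow> nat set \<Rightarrow> nat" where
  "num_paths j f = (if f = edges1 j then 0 else card (f // conn1 j f))"

definition symdiff :: "'a set \<Rightarrow> 'a set \<Rightarrow> 'a set" where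
  "symdiff A B = (A - B) \<union> (B - A)"

text \<open>One reduction stage from level j+1 to level j. Block m (m < 2^j) consists of the
  left edge 2m = {2m,2m+1} and the right edge 2m+1 = {2m+1,2m+2}.\<close>

definition stage_a_blocks :: "nat \<Rightarrow> nat set \<Rightarrow> nat set" where
  "stage_a_blocks j S = {m. m < 2^j \<and> 2*m+1 \<in> S \<and> (2*m+2) mod 2^(j+1) \<in> S}"

definition reduce1 :: "nat \<Rightarrow> nat set \<Rightarrow> nat set" where
  "reduce1 j f =
    (let S = syndrome1 (j+1) f;
         A = stage_a_blocks j S;
         f1 = symdiff f {2*m+1 | m. m \<in> A};
         S1 = S - ({2*m+1 | m. m \<in> A} \<union> {(2*m+2) mod 2^(j+1) | m. m \<in> A});
         f2 = symdiff f1 {2*m | m. m < 2^j \<and> 2*m+1 \<in> S1}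
     in f2)"

definition image1 :: "nat \<Rightarrow> nat set \<Rightarrow> nat set" where
  "image1 j f = {m. m < 2^j \<and> 2*m \<in> reduce1 j f \<and> 2*m+1 \<in> reduce1 j f}"

definition is_preimage1 :: "nat \<Rightarrow> nat set \<Rightarrow> nat set \<Rightarrow> bool" where
  "is_preimage1 j f g \<longleftrightarrow> is_pattern1 (j+1) f \<and> image1 j f = g"

end

theory Submission
  imports Defs
begin

text \<open>Every block m in the image of e_(i+1) either lies in e_(i+1) entirely, or
  contains exactly one edge of it and then a path of e_(i+1) starts at edge 2m+1 or 2m+2.
  Blocks of the first kind use two edges of e_(i+1), blocks of the second kind one edge
  and one path start; distinct blocks use distinct edges and distinct starts, and there
  are at most as many path starts as paths.\<close>

lemma Suc_mod_eq_iff_eq_pred_mod: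
  fixes N e v :: nat
  assumes "e < N" "v < N"
  shows "(e + 1) mod N = v \<longleftrightarrow> e = (v + N - 1) mod N"
proof (cases "e + 1 < N")
  case True
  then show ?thesis using assms by (cases v) (auto simp: mod_if)
next
  case False
  then have "e + 1 = N" using assms by simp
  then show ?thesis using assms by (cases v) (auto simp: mod_if)
qed

lemma pred_mod_mod:
  fixes N a :: nat
  assumes "N > 0"
  shows "(a mod N + N - 1) mod N = (a + N - 1) mod N"
proof -
  have "a mod N + N - 1 = a mod N + (N - 1)" "a + N - 1 = a + (N - 1)" using assms by auto
  then show ?thesis by (simp add: mod_add_left_eq)
qed

lemma pred_mod_Suc_mod:
  fixes N a :: nat
  assumes "a < N"
  shows "((a + 1) mod N + N - 1) mod N = a"
  using Suc_mod_eq_iff_eq_pred_mod[of a N "(a + 1) mod N"] assms by simp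

lemma even_double_Suc_mod:
  fixes m j :: nat
  shows "even ((2 * m + 2) mod 2 ^ (j + 1))"
  by (rule dvd_mod) auto

lemma syndrome1_iff:
  assumes f: "is_pattern1 j f" and j: "j \<ge> 1" and v: "v < 2 ^ j"
  shows "v \<in> syndrome1 j f \<longleftrightarrow> ((v \<in> f) \<noteq> ((v + 2 ^ j - 1) mod 2 ^ j \<in> f))"
proof -
  define N :: nat where "N = 2 ^ j"
  define w where "w = (v + N - 1) mod N"
  have "N \<ge> 2" unfolding N_def using j
    by (metis one_le_numeral power_increasing power_one_right)
  then have "v \<noteq> w" "w < N" unfolding w_def using v N_def
    by (cases v; auto simp: mod_if)+
  have "incident1 j e v \<longleftrightarrow> e = v \<or> e = w" if "e \<in> f" for e
    using that f Suc_mod_eq_iff_eq_pred_mod[of e N v] v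
    unfolding incident1_def w_def is_pattern1_def edges1_def N_def by auto
  then have "{e \<in> f. incident1 j e v} = ({v} \<inter> f) \<union> ({w} \<inter> f)"
    by auto
  with \<open>v \<noteq> w\<close> have "card {e \<in> f. incident1 j e v} = of_bool (v \<in> f) + of_bool (w \<in> f)"
    by (auto simp: card_insert_if)
  then show ?thesis unfolding syndrome1_def using v w_def N_def by auto
qed

definition path_starts :: "nat \<Rightarrow> nat set \<Rightarrow> nat set" where
  "path_starts j f = {e \<in> f. (e + 2 ^ j - 1) mod 2 ^ j \<notin> f}"

lemma adj1_rtrancl_within_run:
  assumes f: "is_pattern1 j f" and s: "s \<in> path_starts j f"
    and run_end: "(s + L) mod 2 ^ j \<notin> f" and run: "\<forall>k<L. (s + k) mod 2 ^ j \<in> f"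
    and st: "(s, t) \<in> (adj1 j f)\<^sup>*"
  shows "\<exists>k<L. t = (s + k) mod 2 ^ j"
  using st
proof (induction rule: rtrancl_induct)
  case base
  have "s < 2 ^ j" using s f unfolding path_starts_def is_pattern1_def edges1_def by auto
  moreover have "L > 0" using run_end s \<open>s < 2 ^ j\<close> unfolding path_starts_def by (cases L) auto
  ultimately show ?case by (intro exI[of _ 0]) auto
next
  case (step u v)
  define N :: nat where "N = 2 ^ j"
  from step.IH obtain k where k: "k < L" "u = (s + k) mod N" unfolding N_def by blast
  have uv: "u \<in> f" "v \<in> f" "v = (u + 1) mod N \<or> u = (v + 1) mod N"
    using step.hyps(2) unfolding adj1_def N_def by auto
  show ?case
  proof (cases "v = (u + 1) mod N")
    case True
    then have v: "v = (s + (k + 1)) mod N" using k by (simp add: mod_Suc_eq)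
    show ?thesis
    proof (cases "k + 1 < L")
      case True then show ?thesis using v N_def by blast
    next
      case False
      then have "k + 1 = L" using k by simp
      then show ?thesis using v uv run_end N_def by simp
    qed
  next
    case False
    then have "u = (v + 1) mod N" using uv by blast
    moreover have "v < N" using uv f unfolding is_pattern1_def edges1_def N_def by auto
    ultimately have v: "v = (u + N - 1) mod N"
      using Suc_mod_eq_iff_eq_pred_mod[of v N u] by (simp add: N_def)
    show ?thesis
    proof (cases k)
      case 0
      then show ?thesis using k v uv s f
        unfolding path_starts_def is_pattern1_def edges1_def N_def by auto
    next
      case (Suc k')
      have "v = (s + k + N - 1) mod N" using v k pred_mod_mod[of N] by (simp add: N_def)
      also have "s + k + N - 1 = (s + k') + N" using Suc by simp
      finally show ?thesis using Suc k by (intro exI[of _ k']) (auto simp: N_def)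
    qed
  qed
qed

text \<open>The class of a start s is the run s, s+1, ..., s+L-1 ending before the first edge
  s+L outside f, which exists because f is not the whole cycle; no other edge of the run
  is a start.\<close>

lemma path_starts_conn1_eq:
  assumes f: "is_pattern1 j f" and ne: "f \<noteq> edges1 j"
    and s: "s \<in> path_starts j f" and t: "t \<in> path_starts j f" and st: "(s, t) \<in> conn1 j f"
  shows "s = t"
proof -
  define N :: nat where "N = 2 ^ j"
  have sN: "s < N" using s f unfolding path_starts_def is_pattern1_def edges1_def N_def by auto
  obtain e0 where e0: "e0 < N" "e0 \<notin> f"
    using f ne unfolding is_pattern1_def edges1_def N_def by blast
  have "(s + (e0 + N - s)) mod N \<notin> f" using sN e0 by simp
  then have ex: "\<exists>L. (s + L) mod N \<notin> f" by blast
  define L where "L = (LEAST L. (s + L) mod N \<notin> f)"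
  have run_end: "(s + L) mod N \<notin> f" unfolding L_def using LeastI_ex[OF ex] .
  have run: "\<forall>k<L. (s + k) mod N \<in> f" unfolding L_def using not_less_Least by blast
  obtain k where k: "k < L" "t = (s + k) mod N"
    using adj1_rtrancl_within_run[OF f s, of L t] run_end run st
    unfolding conn1_def N_def by blast
  show "s = t"
  proof (cases k)
    case 0 then show ?thesis using k sN by simp
  next
    case (Suc k')
    have "(t + N - 1) mod N = (s + k + N - 1) mod N" using k pred_mod_mod[of N] by (simp add: N_def)
    also have "s + k + N - 1 = (s + k') + N" using Suc by simp
    finally have "(t + N - 1) mod N \<in> f" using run k Suc by simp
    then show ?thesis using t unfolding path_starts_def N_def by simp
  qed
qed

lemma card_path_starts_le_num_paths:
  assumes f: "is_pattern1 j f"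
  shows "card (path_starts j f) \<le> num_paths j f"
proof (cases "f = edges1 j")
  case True
  then have "path_starts j f = {}" unfolding path_starts_def edges1_def by auto
  then show ?thesis by simp
next
  case False
  have "inj_on (\<lambda>s. conn1 j f `` {s}) (path_starts j f)"
  proof (rule inj_onI)
    fix s t assume s: "s \<in> path_starts j f" and t: "t \<in> path_starts j f"
      and eq: "conn1 j f `` {s} = conn1 j f `` {t}"
    have "(t, t) \<in> conn1 j f" using t unfolding path_starts_def conn1_def by auto
    with eq have "(s, t) \<in> conn1 j f" by blast
    then show "s = t" using path_starts_conn1_eq[OF f False s t] by blast
  qed
  moreover have "(\<lambda>s. conn1 j f `` {s}) ` path_starts j f \<subseteq> f // conn1 j f"
    unfolding path_starts_def quotient_def by blast
  moreover have "finite (f // conn1 j f)"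
  proof (rule finite_subset)
    show "f // conn1 j f \<subseteq> Pow f" unfolding quotient_def conn1_def by blast
    show "finite (Pow f)" using f finite_subset unfolding is_pattern1_def edges1_def by blast
  qed
  ultimately show ?thesis
    using card_inj_on_le False unfolding num_paths_def by simp
qed

lemma reduce1_block_iff:
  fixes f :: "nat set"
  assumes m: "m < 2 ^ j"
  defines "S \<equiv> syndrome1 (j + 1) f"
  defines "A \<equiv> stage_a_blocks j S"
  shows "2 * m \<in> reduce1 j f \<longleftrightarrow> ((2 * m \<in> f) \<noteq> (2 * m + 1 \<in> S \<and> m \<notin> A))"
    and "2 * m + 1 \<in> reduce1 j f \<longleftrightarrow> ((2 * m + 1 \<in> f) \<noteq> (m \<in> A))"
proof -
  have odd_A: "2 * m + 1 \<in> {2 * m' + 1 | m'. m' \<in> A} \<longleftrightarrow> m \<in> A"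
    and "2 * m \<notin> {2 * m' + 1 | m'. m' \<in> A}" by (auto, presburger)
  moreover have "2 * m \<in> {2 * m' | m'. P m'} \<longleftrightarrow> P m"
    and "2 * m + 1 \<notin> {2 * m' | m'. P m'}" for P by (auto, presburger)
  moreover have "2 * m + 1 \<notin> {(2 * m' + 2) mod 2 ^ (j + 1) | m'. m' \<in> A}"
  proof
    assume "2 * m + 1 \<in> {(2 * m' + 2) mod 2 ^ (j + 1) | m'. m' \<in> A}"
    then obtain m' where "2 * m + 1 = (2 * m' + 2) mod 2 ^ (j + 1)" by blast
    then have "even (2 * m + 1)" using even_double_Suc_mod by metis
    then show False by simp
  qed
  ultimately show "2 * m \<in> reduce1 j f \<longleftrightarrow> ((2 * m \<in> f) \<noteq> (2 * m + 1 \<in> S \<and> m \<notin> A))"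
    and "2 * m + 1 \<in> reduce1 j f \<longleftrightarrow> ((2 * m + 1 \<in> f) \<noteq> (m \<in> A))"
    unfolding reduce1_def Let_def symdiff_def S_def[symmetric] A_def[symmetric]
    using m by auto
qed

definition full_blocks :: "nat \<Rightarrow> nat set \<Rightarrow> nat set" where
  "full_blocks j f = {m. m < 2 ^ j \<and> 2 * m \<in> f \<and> 2 * m + 1 \<in> f}"

definition left_half_blocks :: "nat \<Rightarrow> nat set \<Rightarrow> nat set" where
  "left_half_blocks j f =
    {m. m < 2 ^ j \<and> 2 * m \<in> f \<and> 2 * m + 1 \<notin> f \<and> (2 * m + 2) mod 2 ^ (j + 1) \<in> f}"

definition right_half_blocks :: "nat \<Rightarrow> nat set \<Rightarrow> nat set" where
  "right_half_blocks j f = {m. m < 2 ^ j \<and> 2 * m \<notin> f \<and> 2 * m + 1 \<in> f}"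

lemma finite_blocks [simp]:
  "finite (full_blocks j f)" "finite (left_half_blocks j f)" "finite (right_half_blocks j f)"
  unfolding full_blocks_def left_half_blocks_def right_half_blocks_def by auto

lemma image1_subset_blocks:
  assumes f: "is_pattern1 (j + 1) f"
  shows "image1 j f \<subseteq> full_blocks j f \<union> left_half_blocks j f \<union> right_half_blocks j f"
proof
  fix m assume image: "m \<in> image1 j f"
  define N :: nat where "N = 2 ^ (j + 1)"
  define S where "S = syndrome1 (j + 1) f"
  have m: "m < 2 ^ j" using image unfolding image1_def by auto
  then have mN: "2 * m + 1 < N" unfolding N_def by simp
  have "2 * m + 1 \<in> S \<longleftrightarrow> ((2 * m + 1 \<in> f) \<noteq> (2 * m \<in> f))"
    using syndrome1_iff[OF f _ mN[unfolded N_def]] mN unfolding S_def N_def by simp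
  moreover have "(2 * m + 2) mod N \<in> S \<longleftrightarrow> (((2 * m + 2) mod N \<in> f) \<noteq> (2 * m + 1 \<in> f))"
    using syndrome1_iff[OF f, of "(2 * m + 2) mod N"] pred_mod_Suc_mod[OF mN]
    unfolding S_def N_def by simp
  moreover have "m \<in> stage_a_blocks j S \<longleftrightarrow> 2 * m + 1 \<in> S \<and> (2 * m + 2) mod N \<in> S"
    unfolding stage_a_blocks_def N_def using m by simp
  moreover have "2 * m \<in> reduce1 j f" "2 * m + 1 \<in> reduce1 j f"
    using image unfolding image1_def by auto
  ultimately show "m \<in> full_blocks j f \<union> left_half_blocks j f \<union> right_half_blocks j f"
    using reduce1_block_iff[OF m, of f] m
    unfolding full_blocks_def left_half_blocks_def right_half_blocks_def
      S_def[symmetric] N_def[symmetric] by auto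
qed

lemma card_blocks_le_wt:
  assumes f: "is_pattern1 (j + 1) f"
  shows "2 * card (full_blocks j f) + card (left_half_blocks j f) + card (right_half_blocks j f)
    \<le> wt f"
proof -
  let ?B = "full_blocks j f" and ?L = "left_half_blocks j f" and ?R = "right_half_blocks j f"
  define lefts where "lefts = (\<lambda>m. 2 * m) ` (?B \<union> ?L)"
  define rights where "rights = (\<lambda>m. 2 * m + 1) ` (?B \<union> ?R)"
  have disj: "?B \<inter> ?L = {}" "?B \<inter> ?R = {}"
    unfolding full_blocks_def left_half_blocks_def right_half_blocks_def by auto
  have "card lefts = card ?B + card ?L" unfolding lefts_def
    by (subst card_image) (auto simp: inj_on_def disj card_Un_disjoint)
  moreover have "card rights = card ?B + card ?R" unfolding rights_def
    by (subst card_image) (auto simp: inj_on_def disj card_Un_disjoint)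
  moreover have "lefts \<inter> rights = {}"
    unfolding lefts_def rights_def by (auto; presburger)
  then have "card (lefts \<union> rights) = card lefts + card rights"
    by (intro card_Un_disjoint) (auto simp: lefts_def rights_def)
  moreover have "lefts \<union> rights \<subseteq> f"
    unfolding lefts_def rights_def full_blocks_def left_half_blocks_def right_half_blocks_def by auto
  then have "card (lefts \<union> rights) \<le> wt f"
    using f finite_subset card_mono unfolding wt_def is_pattern1_def edges1_def by blast
  ultimately show ?thesis by simp
qed

lemma card_half_blocks_le_path_starts:
  assumes f: "is_pattern1 (j + 1) f"
  shows "card (left_half_blocks j f) + card (right_half_blocks j f) \<le> card (path_starts (j + 1) f)"
proof -
  define N :: nat where "N = 2 ^ (j + 1)"
  define X where "X = (\<lambda>m. (2 * m + 2) mod N) ` left_half_blocks j f"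
  define Y where "Y = (\<lambda>m. 2 * m + 1) ` right_half_blocks j f"
  have pred: "((2 * m + 2) mod N + N - 1) mod N = 2 * m + 1" if "m < 2 ^ j" for m
    using pred_mod_Suc_mod[of "2 * m + 1" N] that unfolding N_def by simp
  have "inj_on (\<lambda>m. (2 * m + 2) mod N) (left_half_blocks j f)"
  proof (rule inj_onI)
    fix a b assume "a \<in> left_half_blocks j f" "b \<in> left_half_blocks j f"
      and eq: "(2 * a + 2) mod N = (2 * b + 2) mod N"
    then have "a < 2 ^ j" "b < 2 ^ j" unfolding left_half_blocks_def by auto
    then have "2 * a + 1 = 2 * b + 1" using pred eq by metis
    then show "a = b" by simp
  qed
  then have "card X = card (left_half_blocks j f)" unfolding X_def by (rule card_image)
  moreover have "card Y = card (right_half_blocks j f)"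
    unfolding Y_def by (rule card_image) (auto simp: inj_on_def)
  moreover have "X \<inter> Y = {}"
  proof -
    have "even x" if "x \<in> X" for x
      using that even_double_Suc_mod unfolding X_def N_def by auto
    moreover have "odd y" if "y \<in> Y" for y
      using that unfolding Y_def by auto
    ultimately show ?thesis by blast
  qed
  then have "card (X \<union> Y) = card X + card Y"
    by (intro card_Un_disjoint) (auto simp: X_def Y_def)
  moreover have "card (X \<union> Y) \<le> card (path_starts (j + 1) f)"
  proof (rule card_mono)
    show "finite (path_starts (j + 1) f)"
      using f unfolding path_starts_def is_pattern1_def edges1_def by (auto intro: finite_subset)
    have "X \<subseteq> path_starts (j + 1) f"
      using pred unfolding X_def path_starts_def left_half_blocks_def N_def[symmetric] by auto
    moreover have "(2 * m + 1 + N - 1) mod N = 2 * m" if "m < 2 ^ j" for m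
      using that unfolding N_def by simp
    then have "Y \<subseteq> path_starts (j + 1) f"
      unfolding Y_def path_starts_def right_half_blocks_def N_def[symmetric] by auto
    ultimately show "X \<union> Y \<subseteq> path_starts (j + 1) f" by blast
  qed
  ultimately show ?thesis by simp
qed

theorem lemma2:
  fixes i :: nat and e_i e_i1 :: "nat set"
  assumes "is_pattern1 i e_i"
    and "is_preimage1 i e_i1 e_i"
  shows "wt e_i1 + num_paths (i+1) e_i1 \<ge> 2 * wt e_i"
proof -
  let ?B = "full_blocks i e_i1" and ?L = "left_half_blocks i e_i1"
    and ?R = "right_half_blocks i e_i1"
  have f: "is_pattern1 (i + 1) e_i1" and img: "image1 i e_i1 = e_i"
    using assms(2) unfolding is_preimage1_def by auto
  have "wt e_i \<le> card (?B \<union> ?L \<union> ?R)"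
    using image1_subset_blocks[OF f] img unfolding wt_def by (intro card_mono) auto
  also have "\<dots> \<le> card ?B + card ?L + card ?R"
    by (metis add_le_mono card_Un_le le_refl order_trans)
  finally show ?thesis
    using card_blocks_le_wt[OF f] card_half_blocks_le_path_starts[OF f]
      card_path_starts_le_num_paths[OF f] by linarith
qed

end
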